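(* Let $p=(p_1,\dots,p_m)$ and $q=(q_1,\dots,q_m)$ be ordered $m$-tuples of distinct points of $\overline{\mathbf H^n_{\mathbb H}}$, each with the first $i$ points in $\partial\mathbf H^n_{\mathbb H}$ and the remaining points in $\mathbf H^n_{\mathbb H}$, and let $G_1,G_2$ be semi-normalized Gram matrices of lifts of $p$ and $q$, represented by $V_{G_1},V_{G_2}$. Then $p$ and $q$ are congruent under $\mathrm{PSp}(n,1)$ if and only if $O_{V_{G_1}}=O_{V_{G_2}}$.
   Context: Setting: $m\ge4$, $3\le i\le m$; $\mathbb H^{n,1}$ is the right quaternionic space $\mathbb H^{n+1}$ with form $\langle\mathbf z,\mathbf w\rangle=\bar w_{n+1}z_1+\bar w_2z_2+\cdots+\bar w_nz_n+\bar w_1z_{n+1}$; $\mathbf H^n_{\mathbb H}$ and $\partial\mathbf H^n_{\mathbb H}$ are the lines of negative and of nonzero null vectors; $\mathrm{PSp}(n,1)=\mathrm{Sp}(n,1)/\{\pm I\}$ with $\mathrm{Sp}(n,1)$ the form-preserving group; $p,q$ congruent means some $g\in\mathrm{PSp}(n,1)$ has $g(p_k)=q_k$ for all $k$. The Gram matrix of a lift is $g_{kj}=\langle\mathbf p_j,\mathbf p_k\rangle$; it is semi-normalized if $g_{kk}=0$ for $k\le i$, $g_{kk}=-1$ for $k>i$, $g_{1j}=1$ for $2\le j\le i$, $|g_{23}|=1$, and $g_{1j}=r_{1j}>0$ real for $i<j\le m$. It is represented by $V_G=(r_{1(i+1)},\dots,r_{1m},g_{23},\dots,g_{2m},g_{34},\dots,g_{3m},\dots,g_{(m-1)m})$,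 and $O_V=\{\bar\mu V\mu:\mu\text{ a unit quaternion}\}$ (componentwise). *)

theory Defs
  imports Complex_Main
begin

codatatype quat = Quat (Re1: real) (Im1: real) (Im2: real) (Im3: real)

lemma quat_eq_iff: "x = y \<longleftrightarrow> Re1 x = Re1 y \<and> Im1 x = Im1 y \<and> Im2 x = Im2 y \<and> Im3 x = Im3 y"
  by (cases x; cases y) auto

instantiation quat :: ring_1
begin
primcorec zero_quat where "Re1 0 = 0" | "Im1 0 = 0" | "Im2 0 = 0" | "Im3 0 = 0"
primcorec one_quat where "Re1 1 = 1" | "Im1 1 = 0" | "Im2 1 = 0" | "Im3 1 = 0"
primcorec plus_quat where
  "Re1 (x + y) = Re1 x + Re1 y" | "Im1 (x + y) = Im1 x + Im1 y"
| "Im2 (x + y) = Im2 x + Im2 y" | "Im3 (x + y) = Im3 x + Im3 y"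
primcorec uminus_quat where
  "Re1 (- x) = - Re1 x" | "Im1 (- x) = - Im1 x" | "Im2 (- x) = - Im2 x" | "Im3 (- x) = - Im3 x"
primcorec minus_quat where
  "Re1 (x - y) = Re1 x - Re1 y" | "Im1 (x - y) = Im1 x - Im1 y"
| "Im2 (x - y) = Im2 x - Im2 y" | "Im3 (x - y) = Im3 x - Im3 y"
primcorec times_quat where
  "Re1 (x * y) = Re1 x * Re1 y - Im1 x * Im1 y - Im2 x * Im2 y - Im3 x * Im3 y"
| "Im1 (x * y) = Re1 x * Im1 y + Im1 x * Re1 y + Im2 x * Im3 y - Im3 x * Im2 y"
| "Im2 (x * y) = Re1 x * Im2 y - Im1 x * Im3 y + Im2 x * Re1 y + Im3 x * Im1 y"
| "Im3 (x * y) = Re1 x * Im3 y + Im1 x * Im2 y - Im2 x * Im1 y + Im3 x * Re1 y"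
instance
  by standard (simp_all add: quat_eq_iff algebra_simps)
end

primcorec qcnj :: "quat \<Rightarrow> quat" where
  "Re1 (qcnj x) = Re1 x" | "Im1 (qcnj x) = - Im1 x" | "Im2 (qcnj x) = - Im2 x" | "Im3 (qcnj x) = - Im3 x"

definition qnormsq :: "quat \<Rightarrow> real" where
  "qnormsq x = (Re1 x)\<^sup>2 + (Im1 x)\<^sup>2 + (Im2 x)\<^sup>2 + (Im3 x)\<^sup>2"

definition qreal :: "real \<Rightarrow> quat" where
  "qreal r = Quat r 0 0 0"

text \<open>Vectors of the right quaternionic space H^{n+1} are functions nat => quat,
  coordinates indexed by 1..n+1, vanishing elsewhere.\<close>

definition qvecs :: "nat \<Rightarrow> (nat \<Rightarrow> quat) set" where
  "qvecs n = {z. \<forall>k. k \<notin> {1..n+1} \<longrightarrow> z k = 0}"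

definition rsmult :: "(nat \<Rightarrow> quat) \<Rightarrow> quat \<Rightarrow> (nat \<Rightarrow> quat)" where
  "rsmult z c = (\<lambda>k. z k * c)"

definition hform :: "nat \<Rightarrow> (nat \<Rightarrow> quat) \<Rightarrow> (nat \<Rightarrow> quat) \<Rightarrow> quat" where
  "hform n z w = qcnj (w (n+1)) * z 1 + (\<Sum>k\<in>{2..n}. qcnj (w k) * z k) + qcnj (w 1) * z (n+1)"

text \<open>Points of the closure of quaternionic hyperbolic space: quaternionic lines
  z H^* = {z lambda | lambda nonzero} spanned by a nonzero vector z.\<close>
definition qline :: "(nat \<Rightarrow> quat) \<Rightarrow> (nat \<Rightarrow> quat) set" where
  "qline z = {rsmult z c | c. c \<noteq> 0}"

definition hyp_space :: "nat \<Rightarrow> (nat \<Rightarrow> quat) set set" where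
  "hyp_space n = {qline z | z. z \<in> qvecs n \<and> hform n z z = qreal (Re1 (hform n z z)) \<and> Re1 (hform n z z) < 0}"

definition hyp_boundary :: "nat \<Rightarrow> (nat \<Rightarrow> quat) set set" where
  "hyp_boundary n = {qline z | z. z \<in> qvecs n \<and> z \<noteq> (\<lambda>_. 0) \<and> hform n z z = 0}"

text \<open>Quaternionic (n+1)x(n+1) matrices act on the left on column vectors
  (hence right-linearly).\<close>
definition mat_app :: "nat \<Rightarrow> (nat \<Rightarrow> nat \<Rightarrow> quat) \<Rightarrow> (nat \<Rightarrow> quat) \<Rightarrow> (nat \<Rightarrow> quat)" where
  "mat_app n A z = (\<lambda>k. if k \<in> {1..n+1} then (\<Sum>j\<in>{1..n+1}. A k j * z j) else 0)"

definition mat_mult :: "nat \<Rightarrow> (nat \<Rightarrow> nat \<Rightarrow> quat) \<Rightarrow> (nat \<Rightarrow> nat \<Rightarrow> quat) \<Rightarrow> (nat \<Rightarrow> nat \<Rightarrow> quat)" where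
  "mat_mult n A B = (\<lambda>k l. if k \<in> {1..n+1} \<and> l \<in> {1..n+1} then (\<Sum>j\<in>{1..n+1}. A k j * B j l) else 0)"

definition mat_id :: "nat \<Rightarrow> (nat \<Rightarrow> nat \<Rightarrow> quat)" where
  "mat_id n = (\<lambda>k l. if k \<in> {1..n+1} \<and> k = l then 1 else 0)"

definition qmatrices :: "nat \<Rightarrow> (nat \<Rightarrow> nat \<Rightarrow> quat) set" where
  "qmatrices n = {A. \<forall>k l. k \<notin> {1..n+1} \<or> l \<notin> {1..n+1} \<longrightarrow> A k l = 0}"

definition Sp :: "nat \<Rightarrow> (nat \<Rightarrow> nat \<Rightarrow> quat) set" where
  "Sp n = {A \<in> qmatrices n.
      (\<exists>B \<in> qmatrices n. mat_mult n A B = mat_id n \<and> mat_mult n B A = mat_id n) \<and>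
      (\<forall>z \<in> qvecs n. \<forall>w \<in> qvecs n. hform n (mat_app n A z) (mat_app n A w) = hform n z w)}"

text \<open>Action on points (lines): image of the line. Since -I acts trivially,
  this is the action of PSp(n,1) = Sp(n,1)/{+-I}.\<close>
definition act :: "nat \<Rightarrow> (nat \<Rightarrow> nat \<Rightarrow> quat) \<Rightarrow> (nat \<Rightarrow> quat) set \<Rightarrow> (nat \<Rightarrow> quat) set" where
  "act n A P = mat_app n A ` P"

definition congruent_tuples :: "nat \<Rightarrow> nat \<Rightarrow> (nat \<Rightarrow> (nat \<Rightarrow> quat) set) \<Rightarrow> (nat \<Rightarrow> (nat \<Rightarrow> quat) set) \<Rightarrow> bool" where
  "congruent_tuples n m p q = (\<exists>A \<in> Sp n. \<forall>k\<in>{1..m}. act n A (p k) = q k)"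

definition config :: "nat \<Rightarrow> nat \<Rightarrow> nat \<Rightarrow> (nat \<Rightarrow> (nat \<Rightarrow> quat) set) \<Rightarrow> bool" where
  "config n m i p = (inj_on p {1..m} \<and> (\<forall>k\<in>{1..i}. p k \<in> hyp_boundary n)
      \<and> (\<forall>k\<in>{i+1..m}. p k \<in> hyp_space n))"

definition is_lift :: "nat \<Rightarrow> (nat \<Rightarrow> (nat \<Rightarrow> quat) set) \<Rightarrow> (nat \<Rightarrow> nat \<Rightarrow> quat) \<Rightarrow> bool" where
  "is_lift m p P = (\<forall>k\<in>{1..m}. P k \<in> p k)"

definition gram :: "nat \<Rightarrow> nat \<Rightarrow> (nat \<Rightarrow> nat \<Rightarrow> quat) \<Rightarrow> (nat \<Rightarrow> nat \<Rightarrow> quat)" where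
  "gram n m P = (\<lambda>k j. if k \<in> {1..m} \<and> j \<in> {1..m} then hform n (P j) (P k) else 0)"

definition semi_normalized :: "nat \<Rightarrow> nat \<Rightarrow> (nat \<Rightarrow> nat \<Rightarrow> quat) \<Rightarrow> bool" where
  "semi_normalized m i g =
     ((\<forall>k\<in>{1..i}. g k k = 0) \<and> (\<forall>k\<in>{i+1..m}. g k k = - 1)
      \<and> (\<forall>j\<in>{2..i}. g 1 j = 1) \<and> qnormsq (g 2 3) = 1
      \<and> (\<forall>j\<in>{i+1..m}. \<exists>r::real. r > 0 \<and> g 1 j = qreal r))"

text \<open>The representing vector V_G = (r_{1(i+1)},...,r_{1m}, g_{23},...,g_{2m}, ..., g_{(m-1)m}),
  encoded as a function on index pairs (k,j): entry (1,j) for i<j<=m and (k,j) for 2<=k<j<=m,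
  zero elsewhere.\<close>
definition V_of :: "nat \<Rightarrow> nat \<Rightarrow> (nat \<Rightarrow> nat \<Rightarrow> quat) \<Rightarrow> (nat \<times> nat \<Rightarrow> quat)" where
  "V_of m i g = (\<lambda>(k,j). if (k = 1 \<and> i < j \<and> j \<le> m) \<or> (2 \<le> k \<and> k < j \<and> j \<le> m) then g k j else 0)"

definition orbit_V :: "(nat \<times> nat \<Rightarrow> quat) \<Rightarrow> (nat \<times> nat \<Rightarrow> quat) set" where
  "orbit_V V = {(\<lambda>kj. qcnj \<mu> * V kj * \<mu>) | \<mu>. qnormsq \<mu> = 1}"

end

theory Submission
  imports Defs
begin

text \<open>An element of Sp(n,1) carrying p to q carries each lift P_k to Q_k l_k for nonzero
  quaternions l_k, so the Gram matrices satisfy g_{kj} = conj(l_k) h_{kj} l_j. The entries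
  fixed by semi-normalization force all l_k to equal a single unit quaternion mu, hence
  V_{G_1} = conj(mu) V_{G_2} mu. Conversely, equal orbits give a unit mu with
  V_{G_1} = conj(mu) V_{G_2} mu; the entries missing from V are fixed by semi-normalization or
  by Hermitian symmetry, so P and (Q_k mu)_k have the same Gram matrix. Witt's theorem, proved
  by composing quaternionic reflections, then yields an element of Sp(n,1) mapping P_k to
  Q_k mu; the negative vector P_1 - P_2/2 keeps every reflection vector non-isotropic.\<close>

lemma qcnj_add [simp]: "qcnj (a + b) = qcnj a + qcnj b" by (simp add: quat_eq_iff)
lemma qcnj_diff [simp]: "qcnj (a - b) = qcnj a - qcnj b" by (simp add: quat_eq_iff)
lemma qcnj_mult: "qcnj (a * b) = qcnj b * qcnj a" by (simp add: quat_eq_iff algebra_simps)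
lemma qcnj_qcnj [simp]: "qcnj (qcnj a) = a" by (simp add: quat_eq_iff)
lemma qcnj_zero [simp]: "qcnj 0 = 0" by (simp add: quat_eq_iff)
lemma qcnj_one [simp]: "qcnj 1 = 1" by (simp add: quat_eq_iff)
lemma qcnj_eq_0_iff [simp]: "qcnj a = 0 \<longleftrightarrow> a = 0" by (simp add: quat_eq_iff)
lemma qcnj_sum: "qcnj (sum f A) = (\<Sum>x\<in>A. qcnj (f x))"
  by (induction A rule: infinite_finite_induct) auto

lemma qreal_one [simp]: "qreal 1 = 1" by (simp add: quat_eq_iff qreal_def)
lemma qreal_commute: "qreal r * a = a * qreal r" by (simp add: quat_eq_iff qreal_def)
lemma qreal_mult: "qreal r * qreal s = qreal (r * s)" by (simp add: quat_eq_iff qreal_def)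
lemma qreal_inject: "qreal r = qreal s \<longleftrightarrow> r = s" by (simp add: quat_eq_iff qreal_def)
lemma qcnj_qreal [simp]: "qcnj (qreal r) = qreal r" by (simp add: quat_eq_iff qreal_def)
lemma Re1_qreal [simp]: "Re1 (qreal r) = r" by (simp add: qreal_def)
lemma Re1_sum: "Re1 (sum f A) = (\<Sum>x\<in>A. Re1 (f x))"
  by (induction A rule: infinite_finite_induct) auto

lemma qcnj_mult_self: "qcnj a * a = qreal (qnormsq a)"
  by (simp add: quat_eq_iff qreal_def qnormsq_def power2_eq_square algebra_simps)
lemma mult_qcnj_self: "a * qcnj a = qreal (qnormsq a)"
  by (simp add: quat_eq_iff qreal_def qnormsq_def power2_eq_square algebra_simps)
lemma qnormsq_nonneg: "qnormsq a \<ge> 0" by (simp add: qnormsq_def)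
lemma qnormsq_eq_0_iff [simp]: "qnormsq a = 0 \<longleftrightarrow> a = 0"
  by (simp add: qnormsq_def quat_eq_iff add_nonneg_eq_0_iff)
lemma qnormsq_mult: "qnormsq (a * b) = qnormsq a * qnormsq b"
  by (simp add: qnormsq_def power2_eq_square algebra_simps)
lemma qnormsq_qreal: "qnormsq (qreal r) = r\<^sup>2" by (simp add: qnormsq_def qreal_def)
lemma qnormsq_zero [simp]: "qnormsq 0 = 0" by (simp add: qnormsq_def)
lemma qnormsq_one [simp]: "qnormsq 1 = 1" by (simp add: qnormsq_def)
lemma qnormsq_qcnj [simp]: "qnormsq (qcnj a) = qnormsq a" by (simp add: qnormsq_def)

lemma qcnj_mult_unit: "qnormsq u = 1 \<Longrightarrow> qcnj u * u = 1"
  by (simp add: qcnj_mult_self)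
lemma mult_qcnj_unit: "qnormsq u = 1 \<Longrightarrow> u * qcnj u = 1"
  by (simp add: mult_qcnj_self)

lemma qreal_eq_mult_unit:
  assumes r: "r > 0" and s: "s > 0" and rst: "qreal r = qreal s * t" and t: "qnormsq t = 1"
  shows "t = 1"
proof -
  have "qreal (1/s) * qreal r = qreal (1/s) * qreal s * t" using rst by (simp add: mult.assoc)
  then have tq: "t = qreal (r / s)" using s by (simp add: qreal_mult)
  then have "(r / s)\<^sup>2 = 1" using t by (simp add: qnormsq_qreal)
  moreover have "r / s > 0" using r s by simp
  ultimately have "r / s = 1" by (auto simp: power2_eq_1_iff)
  then show ?thesis using tq by simp
qed

instantiation quat :: division_ring
begin

definition inverse_quat :: "quat \<Rightarrow> quat" where
  "inverse_quat a = qcnj a * qreal (1 / qnormsq a)"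

definition divide_quat :: "quat \<Rightarrow> quat \<Rightarrow> quat" where
  "divide_quat a b = a * inverse b"

instance
proof
  fix a :: quat
  assume "a \<noteq> 0"
  then have "qnormsq a \<noteq> 0" by simp
  have "qcnj a * qreal (1 / qnormsq a) * a = qcnj a * a * qreal (1 / qnormsq a)"
    by (simp add: mult.assoc qreal_commute)
  then show "inverse a * a = 1"
    using \<open>qnormsq a \<noteq> 0\<close> by (simp add: inverse_quat_def qcnj_mult_self qreal_mult)
  show "a * inverse a = 1"
    using \<open>qnormsq a \<noteq> 0\<close>
    by (simp add: inverse_quat_def mult_qcnj_self qreal_mult flip: mult.assoc)
qed (simp_all add: inverse_quat_def divide_quat_def)

end

lemma hform_add_left: "hform n (\<lambda>k. x k + y k) w = hform n x w + hform n y w"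
  by (simp add: hform_def distrib_left sum.distrib algebra_simps)
lemma hform_diff_left: "hform n (\<lambda>k. x k - y k) w = hform n x w - hform n y w"
  by (simp add: hform_def right_diff_distrib sum_subtractf algebra_simps)
lemma hform_mult_left: "hform n (\<lambda>k. x k * c) w = hform n x w * c"
  by (simp add: hform_def sum_distrib_right distrib_right mult.assoc)
lemma hform_add_right: "hform n z (\<lambda>k. x k + y k) = hform n z x + hform n z y"
  by (simp add: hform_def distrib_right sum.distrib algebra_simps)
lemma hform_diff_right: "hform n z (\<lambda>k. x k - y k) = hform n z x - hform n z y"
  by (simp add: hform_def left_diff_distrib sum_subtractf algebra_simps)
lemma hform_mult_right: "hform n z (\<lambda>k. x k * c) = qcnj c * hform n z x"
  by (simp add: hform_def sum_distrib_left distrib_left mult.assoc qcnj_mult)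
lemma hform_rsmult_left: "hform n (rsmult x c) w = hform n x w * c"
  by (simp add: rsmult_def hform_mult_left)
lemma hform_rsmult_right: "hform n z (rsmult x c) = qcnj c * hform n z x"
  by (simp add: rsmult_def hform_mult_right)

lemma qcnj_hform: "qcnj (hform n z w) = hform n w z"
  by (simp add: hform_def qcnj_sum qcnj_mult algebra_simps)

lemma hform_self_real: "hform n z z = qreal (Re1 (hform n z z))"
proof -
  have "qcnj (hform n z z) = hform n z z" by (simp add: qcnj_hform)
  then have "Im1 (hform n z z) = 0 \<and> Im2 (hform n z z) = 0 \<and> Im3 (hform n z z) = 0"
    by (metis qcnj.sel(2,3,4) neg_equal_zero)
  then show ?thesis by (simp add: quat_eq_iff qreal_def)
qed

lemma Re1_hform_first_zero:
  assumes "w 1 = 0"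
  shows "Re1 (hform n w w) = (\<Sum>k\<in>{2..n}. qnormsq (w k))"
  using assms by (simp add: hform_def qcnj_mult_self Re1_sum)

lemma Re1_hform_first_zero_nonneg: "w 1 = 0 \<Longrightarrow> Re1 (hform n w w) \<ge> 0"
  by (simp add: Re1_hform_first_zero sum_nonneg qnormsq_nonneg)

lemma rsmult_qvecs: "z \<in> qvecs n \<Longrightarrow> rsmult z c \<in> qvecs n"
  by (simp add: rsmult_def qvecs_def)

lemma qvecs_diff_mult: "x \<in> qvecs n \<Longrightarrow> d \<in> qvecs n \<Longrightarrow> (\<lambda>k. x k - d k * c) \<in> qvecs n"
  by (simp add: qvecs_def)

section \<open>Negative and isotropic vectors\<close>

lemma isotropic_first_zero_orthogonal_eq_zero:
  assumes x: "x \<in> qvecs n" and x1: "x 1 = 0" and xx: "Re1 (hform n x x) = 0"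
    and xv: "hform n x v = 0" and v1: "v 1 \<noteq> 0"
  shows "x = (\<lambda>_. 0)"
proof
  have "\<forall>k\<in>{2..n}. qnormsq (x k) = 0"
    using xx x1 by (simp add: Re1_hform_first_zero sum_nonneg_eq_0_iff qnormsq_nonneg)
  then have mid: "\<forall>k\<in>{2..n}. x k = 0" by simp
  then have "hform n x v = qcnj (v 1) * x (n+1)"
    using x1 by (simp add: hform_def)
  with xv v1 have last: "x (n+1) = 0" by simp
  fix k
  show "x k = 0"
  proof (cases "k \<in> {1..n+1}")
    case True
    then have "k = 1 \<or> k \<in> {2..n} \<or> k = n+1" by auto
    then show ?thesis using x1 mid last by auto
  qed (use x in \<open>simp add: qvecs_def\<close>)
qed

text \<open>Adding a multiple of the negative vector v kills the first coordinate of x without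
  increasing the value of the form, and on vectors with vanishing first coordinate the form is
  positive semi-definite.\<close>

lemma orthogonal_to_negative_eq_zero:
  assumes v: "v \<in> qvecs n" and vneg: "Re1 (hform n v v) < 0"
    and x: "x \<in> qvecs n" and xv: "hform n x v = 0" and xx: "Re1 (hform n x x) \<le> 0"
  shows "x = (\<lambda>_. 0)"
proof -
  have v1: "v 1 \<noteq> 0"
  proof
    assume "v 1 = 0"
    with vneg show False using Re1_hform_first_zero_nonneg[of v n] by simp
  qed
  define r where "r = Re1 (hform n v v)"
  define s where "s = - (inverse (v 1) * x 1)"
  define w where "w = (\<lambda>k. x k + v k * s)"
  have w1: "w 1 = 0"
    using v1 by (simp add: w_def s_def flip: mult.assoc)
  have vx: "hform n v x = 0" using xv qcnj_hform[of n x v] by simp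
  have "hform n w w = hform n x x + qcnj s * hform n v v * s"
    unfolding w_def
    by (simp add: hform_add_left hform_add_right hform_mult_left hform_mult_right xv vx mult.assoc)
  also have "qcnj s * hform n v v * s = qreal r * (qcnj s * s)"
    using hform_self_real[of n v] unfolding r_def by (metis qreal_commute mult.assoc)
  finally have "hform n w w = hform n x x + qreal (r * qnormsq s)"
    by (simp add: qcnj_mult_self qreal_mult)
  then have "Re1 (hform n w w) = Re1 (hform n x x) + r * qnormsq s" by simp
  moreover have "Re1 (hform n w w) \<ge> 0" using w1 by (rule Re1_hform_first_zero_nonneg)
  moreover have "r < 0" using vneg r_def by simp
  moreover from this have "r * qnormsq s \<le> 0" by (simp add: mult_nonpos_nonneg qnormsq_nonneg)
  ultimately have "r * qnormsq s = 0" and xx0: "Re1 (hform n x x) = 0"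
    using xx by linarith+
  with \<open>r < 0\<close> have "qnormsq s = 0" by simp
  then have "s = 0" by simp
  then have "x 1 = 0" using v1 by (simp add: s_def)
  then show ?thesis
    using isotropic_first_zero_orthogonal_eq_zero[OF x _ xx0 xv v1] by simp
qed

lemma mat_app_qvecs: "mat_app n A z \<in> qvecs n"
  by (simp add: mat_app_def qvecs_def)
lemma mat_mult_qmatrices: "mat_mult n A B \<in> qmatrices n"
  by (auto simp: mat_mult_def qmatrices_def)

lemma if_one_zero_mult: "(if c then 1 else 0) * (x::quat) = (if c then x else 0)" by simp
lemma mult_if_one_zero: "(x::quat) * (if c then 1 else 0) = (if c then x else 0)" by simp

lemma mat_app_in: "k \<in> {1..n+1} \<Longrightarrow> mat_app n A z k = (\<Sum>j\<in>{1..n+1}. A k j * z j)"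
  by (simp add: mat_app_def)
lemma mat_app_out: "k \<notin> {1..n+1} \<Longrightarrow> mat_app n A z k = 0"
  unfolding mat_app_def by (simp only: if_False)

lemma mat_app_mat_mult: "mat_app n A (mat_app n B z) = mat_app n (mat_mult n A B) z"
proof
  fix k
  show "mat_app n A (mat_app n B z) k = mat_app n (mat_mult n A B) z k"
  proof (cases "k \<in> {1..n+1}")
    case True
    have "mat_app n A (mat_app n B z) k = (\<Sum>j\<in>{1..n+1}. A k j * (\<Sum>l\<in>{1..n+1}. B j l * z l))"
      using True by (simp only: mat_app_in cong: sum.cong)
    also have "\<dots> = (\<Sum>j\<in>{1..n+1}. \<Sum>l\<in>{1..n+1}. A k j * B j l * z l)"
      by (simp only: sum_distrib_left mult.assoc)
    also have "\<dots> = (\<Sum>l\<in>{1..n+1}. \<Sum>j\<in>{1..n+1}. A k j * B j l * z l)"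
      by (rule sum.swap)
    also have "\<dots> = (\<Sum>l\<in>{1..n+1}. mat_mult n A B k l * z l)"
      using True by (simp add: mat_mult_def sum_distrib_right del: sum.cl_ivl_Suc)
    also have "\<dots> = mat_app n (mat_mult n A B) z k"
      using True by (simp only: mat_app_in)
    finally show ?thesis .
  qed (simp add: mat_app_out)
qed

lemma mat_app_mat_id: "z \<in> qvecs n \<Longrightarrow> mat_app n (mat_id n) z = z"
proof
  fix k assume z: "z \<in> qvecs n"
  show "mat_app n (mat_id n) z k = z k"
  proof (cases "k \<in> {1..n+1}")
    case True
    then have "mat_app n (mat_id n) z k = (\<Sum>j\<in>{1..n+1}. (if k = j then z j else 0))"
      by (simp only: mat_app_in) (auto simp: mat_id_def if_one_zero_mult intro!: sum.cong)
    also have "\<dots> = z k" using True by (subst sum.delta') auto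
    finally show ?thesis .
  qed (use z in \<open>simp add: mat_app_out qvecs_def\<close>)
qed

lemma mat_app_rsmult: "mat_app n A (rsmult z c) = rsmult (mat_app n A z) c"
  by (auto simp: mat_app_def rsmult_def sum_distrib_right mult.assoc simp del: sum.cl_ivl_Suc)

text \<open>A matrix is determined by its action on the standard basis vectors.\<close>

lemma mat_mult_eq_mat_id:
  assumes "\<forall>z\<in>qvecs n. mat_app n A (mat_app n B z) = z"
  shows "mat_mult n A B = mat_id n"
proof (intro ext)
  fix k l
  show "mat_mult n A B k l = mat_id n k l"
  proof (cases "k \<in> {1..n+1} \<and> l \<in> {1..n+1}")
    case True
    define e where "e = (\<lambda>j. if j = l then (1::quat) else 0)"
    have e: "e \<in> qvecs n" using True by (auto simp: e_def qvecs_def)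
    have "mat_app n (mat_mult n A B) e k = (\<Sum>j\<in>{1..n+1}. if j = l then mat_mult n A B k j else 0)"
      using True by (simp only: mat_app_in) (auto simp: e_def mult_if_one_zero intro!: sum.cong)
    also have "\<dots> = mat_mult n A B k l" using True by (subst sum.delta) auto
    finally have "mat_app n (mat_mult n A B) e k = mat_mult n A B k l" .
    moreover have "mat_app n (mat_mult n A B) e k = e k"
      using assms e by (simp add: mat_app_mat_mult)
    ultimately show ?thesis using True by (simp add: e_def mat_id_def)
  qed (auto simp: mat_mult_def mat_id_def)
qed

lemma SpI:
  assumes "A \<in> qmatrices n" "B \<in> qmatrices n"
    "\<forall>z\<in>qvecs n. mat_app n A (mat_app n B z) = z"
    "\<forall>z\<in>qvecs n. mat_app n B (mat_app n A z) = z"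
    "\<forall>z\<in>qvecs n. \<forall>w\<in>qvecs n. hform n (mat_app n A z) (mat_app n A w) = hform n z w"
  shows "A \<in> Sp n"
  unfolding Sp_def using assms mat_mult_eq_mat_id by blast

lemma Sp_hform: "A \<in> Sp n \<Longrightarrow> z \<in> qvecs n \<Longrightarrow> w \<in> qvecs n \<Longrightarrow>
    hform n (mat_app n A z) (mat_app n A w) = hform n z w"
  by (simp add: Sp_def)

lemma Sp_inverse:
  assumes "A \<in> Sp n"
  obtains B where "B \<in> qmatrices n" "\<forall>z\<in>qvecs n. mat_app n A (mat_app n B z) = z"
    "\<forall>z\<in>qvecs n. mat_app n B (mat_app n A z) = z"
proof -
  obtain B where "B \<in> qmatrices n" "mat_mult n A B = mat_id n" "mat_mult n B A = mat_id n"
    using assms unfolding Sp_def by blast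
  then show thesis using that by (simp add: mat_app_mat_mult mat_app_mat_id)
qed

lemma mat_mult_Sp:
  assumes S: "S \<in> Sp n" and A: "A \<in> Sp n"
  shows "mat_mult n S A \<in> Sp n"
proof -
  obtain BS where BS: "BS \<in> qmatrices n" "\<forall>z\<in>qvecs n. mat_app n S (mat_app n BS z) = z"
      "\<forall>z\<in>qvecs n. mat_app n BS (mat_app n S z) = z" using Sp_inverse[OF S] by blast
  obtain BA where BA: "BA \<in> qmatrices n" "\<forall>z\<in>qvecs n. mat_app n A (mat_app n BA z) = z"
      "\<forall>z\<in>qvecs n. mat_app n BA (mat_app n A z) = z" using Sp_inverse[OF A] by blast
  show ?thesis
  proof (rule SpI[OF mat_mult_qmatrices mat_mult_qmatrices[of n BA BS]])
  qed (use BS BA S A in \<open>simp_all add: mat_app_mat_mult[symmetric] mat_app_qvecs Sp_hform\<close>)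
qed

lemma mat_id_Sp: "mat_id n \<in> Sp n"
proof -
  have I: "mat_id n \<in> qmatrices n" by (auto simp: qmatrices_def mat_id_def)
  show ?thesis by (rule SpI[OF I I]) (simp_all add: mat_app_mat_id mat_app_qvecs)
qed

section \<open>Reflections and Witt's theorem\<close>

definition form_partner :: "nat \<Rightarrow> nat \<Rightarrow> nat" where
  "form_partner n l = (if l = 1 then n+1 else if l = n+1 then 1 else l)"

lemma hform_eq_sum_form_partner:
  assumes n: "n \<ge> 1"
  shows "hform n z w = (\<Sum>l\<in>{1..n+1}. qcnj (w (form_partner n l)) * z l)"
proof -
  let ?f = "\<lambda>l. qcnj (w (form_partner n l)) * z l"
  have "{1..n+1} = insert 1 {2..n+1}" by auto
  then have "sum ?f {1..n+1} = ?f 1 + sum ?f {2..n+1}" by simp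
  also have "sum ?f {2..n+1} = sum ?f {2..n} + ?f (n+1)"
    using n by (simp add: sum.cl_ivl_Suc)
  also have "sum ?f {2..n} = (\<Sum>k\<in>{2..n}. qcnj (w k) * z k)"
    by (rule sum.cong) (auto simp: form_partner_def)
  finally show ?thesis using n unfolding hform_def by (simp add: form_partner_def algebra_simps)
qed

definition reflection_mat :: "nat \<Rightarrow> (nat \<Rightarrow> quat) \<Rightarrow> quat \<Rightarrow> (nat \<Rightarrow> nat \<Rightarrow> quat)" where
  "reflection_mat n d c = (\<lambda>k l. if k \<in> {1..n+1} \<and> l \<in> {1..n+1}
       then (if k = l then 1 else 0) - d k * c * qcnj (d (form_partner n l)) else 0)"

lemma reflection_mat_qmatrices: "reflection_mat n d c \<in> qmatrices n"
  by (auto simp: reflection_mat_def qmatrices_def)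

lemma mat_app_reflection_mat:
  assumes n: "n \<ge> 1" and x: "x \<in> qvecs n" and d: "d \<in> qvecs n"
  shows "mat_app n (reflection_mat n d c) x = (\<lambda>k. x k - d k * (c * hform n x d))"
proof
  fix k
  show "mat_app n (reflection_mat n d c) x k = x k - d k * (c * hform n x d)"
  proof (cases "k \<in> {1..n+1}")
    case True
    have "mat_app n (reflection_mat n d c) x k =
        (\<Sum>l\<in>{1..n+1}. (if k = l then x l else 0) - d k * c * (qcnj (d (form_partner n l)) * x l))"
      using True by (simp only: mat_app_in)
        (auto simp: reflection_mat_def left_diff_distrib mult.assoc intro!: sum.cong)
    also have "\<dots> = x k - d k * c * (\<Sum>l\<in>{1..n+1}. qcnj (d (form_partner n l)) * x l)"
      using True by (simp add: sum_subtractf sum_distrib_left sum.delta del: sum.cl_ivl_Suc)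
    also have "\<dots> = x k - d k * (c * hform n x d)"
      using n by (simp add: hform_eq_sum_form_partner mult.assoc)
    finally show ?thesis .
  qed (use x d in \<open>simp add: mat_app_out qvecs_def\<close>)
qed

lemma reflection_cancel:
  assumes c: "c1 + c2 - c2 * hform n d d * c1 = 0"
  shows "(\<lambda>k. (\<lambda>k. x k - d k * (c1 * hform n x d)) k
            - d k * (c2 * hform n (\<lambda>k. x k - d k * (c1 * hform n x d)) d)) = x"
proof
  fix k
  have h: "hform n (\<lambda>k. x k - d k * (c1 * hform n x d)) d
      = hform n x d - hform n d d * (c1 * hform n x d)"
    by (simp add: hform_diff_left hform_mult_left)
  have "d k * (c1 * hform n x d) + d k * (c2 * (hform n x d - hform n d d * (c1 * hform n x d)))
      = d k * ((c1 + c2 - c2 * hform n d d * c1) * hform n x d)"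
    by (simp add: algebra_simps)
  then show "x k - d k * (c1 * hform n x d)
      - d k * (c2 * hform n (\<lambda>k. x k - d k * (c1 * hform n x d)) d) = x k"
    unfolding h c by (simp add: algebra_simps)
qed

lemma hform_reflection:
  assumes c: "c + qcnj c = qcnj c * hform n d d * c"
  shows "hform n (\<lambda>k. x k - d k * (c * hform n x d)) (\<lambda>k. w k - d k * (c * hform n w d))
    = hform n x w"
proof -
  let ?a = "hform n x d" and ?b = "hform n w d" and ?N = "hform n d d"
  have dw: "hform n d w = qcnj ?b" by (simp add: qcnj_hform)
  have "hform n (\<lambda>k. x k - d k * (c * ?a)) (\<lambda>k. w k - d k * (c * ?b))
      = hform n x w - qcnj (c * ?b) * ?a - qcnj ?b * (c * ?a) + qcnj (c * ?b) * ?N * (c * ?a)"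
    by (simp add: hform_diff_left hform_diff_right hform_mult_left hform_mult_right dw algebra_simps)
  also have "\<dots> = hform n x w - qcnj ?b * ((c + qcnj c - qcnj c * ?N * c) * ?a)"
    by (simp add: qcnj_mult algebra_simps)
  finally show ?thesis using c by simp
qed

lemma reflection_mat_Sp:
  assumes n: "n \<ge> 1" and d: "d \<in> qvecs n" and c: "c + qcnj c = qcnj c * hform n d d * c"
  shows "reflection_mat n d c \<in> Sp n"
proof -
  define N where "N = Re1 (hform n d d)"
  have N: "hform n d d = qreal N" unfolding N_def by (rule hform_self_real)
  have "qcnj c * qreal N * c = qreal N * (qcnj c * c)" "c * qreal N * qcnj c = qreal N * (c * qcnj c)"
    by (metis qreal_commute mult.assoc)+
  then have "qcnj c * hform n d d * c = c * hform n d d * qcnj c"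
    unfolding N by (simp add: qcnj_mult_self mult_qcnj_self)
  then have c1: "c + qcnj c - qcnj c * hform n d d * c = 0"
    and c2: "qcnj c + c - c * hform n d d * qcnj c = 0"
    using c by (simp_all add: add.commute)
  show ?thesis
  proof (rule SpI[OF reflection_mat_qmatrices reflection_mat_qmatrices[of n d "qcnj c"]])
  qed (use reflection_cancel[OF c2] reflection_cancel[OF c1] hform_reflection[OF c] in
      \<open>simp_all add: mat_app_reflection_mat[OF n _ d] qvecs_diff_mult[OF _ d]\<close>)
qed

text \<open>For d = z - y and a = <z, d>, equal norms give <d, d> = a + conj a, which is exactly
  the condition making the reflection with coefficient a^-1 an isometry; it sends z to y.\<close>

lemma reflection_maps:
  assumes n: "n \<ge> 1" and z: "z \<in> qvecs n" and y: "y \<in> qvecs n"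
    and zy: "hform n z z = hform n y y"
    and a0: "hform n z (\<lambda>k. z k - y k) \<noteq> 0"
  defines "S \<equiv> reflection_mat n (\<lambda>k. z k - y k) (inverse (hform n z (\<lambda>k. z k - y k)))"
  shows "S \<in> Sp n" "mat_app n S z = y"
    "\<And>u. u \<in> qvecs n \<Longrightarrow> hform n u (\<lambda>k. z k - y k) = 0 \<Longrightarrow> mat_app n S u = u"
proof -
  define d where "d = (\<lambda>k. z k - y k)"
  define a where "a = hform n z d"
  define c where "c = inverse a"
  have anz: "a \<noteq> 0" using a0 by (simp add: a_def d_def)
  have d: "d \<in> qvecs n" using z y by (simp add: d_def qvecs_def)
  have N: "hform n d d = a + qcnj a"
  proof -
    have "qcnj a = hform n z z - hform n y z" unfolding a_def d_def
      by (simp add: qcnj_hform hform_diff_left)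
    moreover have "hform n d d = a - (hform n y z - hform n y y)"
      unfolding a_def by (simp add: d_def hform_diff_left hform_diff_right)
    ultimately show ?thesis using zy by simp
  qed
  have ac: "a * c = 1" using anz by (simp add: c_def)
  then have "qcnj c * qcnj a = 1" by (metis qcnj_mult qcnj_one)
  moreover have "qcnj c * (a + qcnj a) * c = qcnj c * (a * c) + qcnj c * qcnj a * c"
    by (simp add: algebra_simps)
  ultimately have C: "c + qcnj c = qcnj c * hform n d d * c"
    unfolding N ac by simp
  have Sdef: "S = reflection_mat n d c" unfolding S_def d_def c_def a_def ..
  show "S \<in> Sp n" unfolding Sdef by (rule reflection_mat_Sp[OF n d C])
  have "(\<lambda>k. z k - d k * (c * a)) = y" using anz by (simp add: c_def d_def)
  then show "mat_app n S z = y" unfolding Sdef mat_app_reflection_mat[OF n z d] a_def .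
  fix u assume u: "u \<in> qvecs n" and "hform n u (\<lambda>k. z k - y k) = 0"
  then have "hform n u d = 0" by (simp add: d_def)
  then show "mat_app n S u = u" unfolding Sdef mat_app_reflection_mat[OF n u d] by simp
qed

text \<open>If the form value of z and d = z - y vanished, d would be isotropic and orthogonal to
  both z and y, hence to v; the negative vector v rules this out.\<close>

lemma Sp_maps_vector_fixing_orthogonal:
  assumes n: "n \<ge> 1" and z: "z \<in> qvecs n" and y: "y \<in> qvecs n"
    and zy: "hform n z z = hform n y y"
    and v: "v \<in> qvecs n" "Re1 (hform n v v) < 0"
    and vd: "v = y \<or> hform n v (\<lambda>k. z k - y k) = 0"
  shows "\<exists>S\<in>Sp n. mat_app n S z = y
           \<and> (\<forall>u\<in>qvecs n. hform n u (\<lambda>k. z k - y k) = 0 \<longrightarrow> mat_app n S u = u)"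
proof (cases "z = y")
  case True
  then show ?thesis using mat_id_Sp mat_app_mat_id z by blast
next
  case False
  define d where "d = (\<lambda>k. z k - y k)"
  have d: "d \<in> qvecs n" using z y by (simp add: d_def qvecs_def)
  have "d \<noteq> (\<lambda>_. 0)" using False by (auto simp: d_def fun_eq_iff)
  have "hform n z d \<noteq> 0"
  proof
    assume zd: "hform n z d = 0"
    have "qcnj (hform n z d) = hform n z z - hform n y z"
      by (simp add: d_def qcnj_hform hform_diff_left)
    then have yd: "hform n y d = 0"
      using zd zy by (simp add: d_def hform_diff_right)
    have dd: "hform n d d = 0"
      using zd yd by (simp add: d_def hform_diff_left)
    have "hform n v d = 0" using vd yd by (auto simp: d_def)
    then have "hform n d v = 0" using qcnj_hform[of n v d] by simp
    then have "d = (\<lambda>_. 0)" using orthogonal_to_negative_eq_zero[OF v d] dd by simp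
    with \<open>d \<noteq> (\<lambda>_. 0)\<close> show False ..
  qed
  then show ?thesis using reflection_maps[OF n z y zy] unfolding d_def by blast
qed

text \<open>Witt's theorem, by induction along the tuple: each step composes with a reflection that
  fixes the vectors already matched.\<close>

lemma Sp_maps_tuple_of_equal_gram:
  fixes x y :: "nat \<Rightarrow> nat \<Rightarrow> quat"
  assumes n: "n \<ge> 1"
    and vecs: "\<forall>k\<le>M. x k \<in> qvecs n \<and> y k \<in> qvecs n"
    and gram: "\<forall>j\<le>M. \<forall>k\<le>M. hform n (x j) (x k) = hform n (y j) (y k)"
    and neg: "Re1 (hform n (x 0) (x 0)) < 0"
  shows "\<exists>A\<in>Sp n. \<forall>k\<le>M. mat_app n A (x k) = y k"
proof -
  have "K \<le> Suc M \<Longrightarrow> \<exists>A\<in>Sp n. \<forall>k<K. mat_app n A (x k) = y k" for K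
  proof (induction K)
    case 0
    then show ?case using mat_id_Sp by blast
  next
    case (Suc K)
    then obtain A where A: "A \<in> Sp n" "\<forall>k<K. mat_app n A (x k) = y k" by auto
    have KM: "K \<le> M" using Suc.prems by simp
    define z where "z = mat_app n A (x K)"
    have Agram: "hform n (mat_app n A (x j)) z = hform n (y j) (y K)" if "j \<le> M" for j
      using Sp_hform[OF A(1)] vecs gram that KM unfolding z_def by simp
    have orth: "hform n (y j) (\<lambda>k. z k - y K k) = 0" if "j < K" for j
      using Agram[of j] A(2) that KM by (simp add: hform_diff_right)
    have y0: "y 0 \<in> qvecs n" "Re1 (hform n (y 0) (y 0)) < 0" using vecs gram neg by auto
    have "y 0 = y K \<or> hform n (y 0) (\<lambda>k. z k - y K k) = 0"
      using orth[of 0] by (cases "K = 0") auto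
    then obtain S where S: "S \<in> Sp n" "mat_app n S z = y K"
      "\<forall>u\<in>qvecs n. hform n u (\<lambda>k. z k - y K k) = 0 \<longrightarrow> mat_app n S u = u"
      using Sp_maps_vector_fixing_orthogonal[OF n mat_app_qvecs _ _ y0] vecs KM Agram[OF KM]
      unfolding z_def by blast
    have "\<forall>k<Suc K. mat_app n (mat_mult n S A) (x k) = y k"
      using S A orth vecs KM by (auto simp: less_Suc_eq mat_app_mat_mult[symmetric] z_def)
    then show ?case using mat_mult_Sp[OF S(1) A(1)] by blast
  qed
  from this[of "Suc M"] show ?thesis by (auto simp: less_Suc_eq_le)
qed

section \<open>Semi-normalized Gram matrices\<close>

lemma gram_apply: "k \<in> {1..m} \<Longrightarrow> j \<in> {1..m} \<Longrightarrow> gram n m P k j = hform n (P j) (P k)"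
  by (simp add: gram_def)

lemma gram_hermitian: "\<forall>k\<in>{1..m}. \<forall>j\<in>{1..m}. gram n m P k j = qcnj (gram n m P j k)"
  by (simp add: gram_apply qcnj_hform)

lemma real_eq_1_of_pairwise_products:
  fixes x y z :: real
  assumes "x \<ge> 0" "x * y = 1" "x * z = 1" "y * z = 1"
  shows "x = 1"
proof -
  have "x\<^sup>2 = x\<^sup>2 * (y * z)" using assms(4) by simp
  also have "\<dots> = (x * y) * (x * z)" by (simp add: power2_eq_square algebra_simps)
  finally have "x\<^sup>2 = 1" using assms(2,3) by simp
  with assms(1) show ?thesis by (auto simp: power2_eq_1_iff)
qed

text \<open>Rescaling the lifts of a semi-normalized configuration by l keeps it semi-normalized
  only if l is constant and unit: the entries g_{1j} = 1 for j \<le> i and |g_{23}| = 1 force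
  unit moduli and l_j = l_1 on the boundary points, and g_{jj} = -1 together with g_{1j} > 0
  does the same for the interior points.\<close>

lemma semi_normalized_rescaling_unit:
  fixes g h :: "nat \<Rightarrow> nat \<Rightarrow> quat" and l :: "nat \<Rightarrow> quat"
  assumes sg: "semi_normalized m i g" and sh: "semi_normalized m i h"
    and i: "3 \<le> i" "i \<le> m"
    and rel: "\<forall>k\<in>{1..m}. \<forall>j\<in>{1..m}. g k j = qcnj (l k) * h k j * l j"
  shows "qnormsq (l 1) = 1 \<and> (\<forall>k\<in>{1..m}. l k = l 1)"
proof -
  have boundary: "qcnj (l 1) * l j = 1" if "j \<in> {2..i}" for j
  proof -
    have "g 1 j = 1" "h 1 j = 1" using sg sh that unfolding semi_normalized_def by auto
    then show ?thesis using rel that i by force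
  qed
  have "qnormsq (g 2 3) = 1" "qnormsq (h 2 3) = 1" using sg sh unfolding semi_normalized_def by auto
  then have n23: "qnormsq (l 2) * qnormsq (l 3) = 1" using rel i by (simp add: qnormsq_mult)
  have n1: "qnormsq (l 1) * qnormsq (l j) = 1" if "j \<in> {2..i}" for j
    using arg_cong[OF boundary[OF that], of qnormsq] by (simp add: qnormsq_mult)
  have unit: "qnormsq (l 1) = 1"
    using real_eq_1_of_pairwise_products[OF qnormsq_nonneg n1[of 2] n1[of 3] n23] i by simp
  have l1: "l 1 * qcnj (l 1) = 1" using unit by (rule mult_qcnj_unit)
  have same: "l j = l 1" if "qcnj (l 1) * l j = 1" for j
    by (metis l1 that mult.assoc mult_1_left mult_1_right)
  have interior: "qcnj (l 1) * l j = 1" if j: "j \<in> {i+1..m}" for j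
  proof -
    have "g j j = -1" "h j j = -1" using sg sh j unfolding semi_normalized_def by auto
    then have "qcnj (l j) * l j = 1" using rel j i by force
    then have "qnormsq (l j) = 1" by (simp add: qcnj_mult_self qreal_inject flip: qreal_one)
    then have unit1j: "qnormsq (qcnj (l 1) * l j) = 1" using unit by (simp add: qnormsq_mult)
    obtain r s where "r > 0" "g 1 j = qreal r" "s > 0" "h 1 j = qreal s"
      using sg sh j unfolding semi_normalized_def by blast
    moreover have "g 1 j = qcnj (l 1) * h 1 j * l j" using rel j i by auto
    ultimately have "qreal r = qreal s * (qcnj (l 1) * l j)" by (metis mult.assoc qreal_commute)
    then show ?thesis using qreal_eq_mult_unit \<open>r > 0\<close> \<open>s > 0\<close> unit1j by blast
  qed
  have "l k = l 1" if k: "k \<in> {1..m}" for k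
  proof -
    consider "k = 1" | "k \<in> {2..i}" | "k \<in> {i+1..m}" using k by fastforce
    then show ?thesis using same boundary interior by cases auto
  qed
  with unit show ?thesis by blast
qed

lemma V_of_sandwich:
  assumes "\<forall>k\<in>{1..m}. \<forall>j\<in>{1..m}. g k j = qcnj \<mu> * h k j * \<mu>"
  shows "V_of m i g = (\<lambda>kj. qcnj \<mu> * V_of m i h kj * \<mu>)"
proof
  fix kj :: "nat \<times> nat"
  obtain k j where kj: "kj = (k, j)" by fastforce
  show "V_of m i g kj = qcnj \<mu> * V_of m i h kj * \<mu>"
    using assms[rule_format, of k j] unfolding kj V_of_def by auto
qed

lemma V_in_orbit_V: "V \<in> orbit_V V"
  unfolding orbit_V_def by (rule CollectI, rule exI[of _ 1]) simp

lemma orbit_V_sandwich: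
  assumes \<mu>: "qnormsq \<mu> = 1"
  shows "orbit_V (\<lambda>kj. qcnj \<mu> * V kj * \<mu>) = orbit_V V"
proof
  show "orbit_V (\<lambda>kj. qcnj \<mu> * V kj * \<mu>) \<subseteq> orbit_V V"
  proof
    fix W assume "W \<in> orbit_V (\<lambda>kj. qcnj \<mu> * V kj * \<mu>)"
    then obtain \<nu> where \<nu>: "qnormsq \<nu> = 1" "W = (\<lambda>kj. qcnj \<nu> * (qcnj \<mu> * V kj * \<mu>) * \<nu>)"
      unfolding orbit_V_def by auto
    have "W = (\<lambda>kj. qcnj (\<mu> * \<nu>) * V kj * (\<mu> * \<nu>))" unfolding \<nu> by (simp add: qcnj_mult mult.assoc)
    moreover have "qnormsq (\<mu> * \<nu>) = 1" using \<nu> \<mu> by (simp add: qnormsq_mult)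
    ultimately show "W \<in> orbit_V V" unfolding orbit_V_def by blast
  qed
  show "orbit_V V \<subseteq> orbit_V (\<lambda>kj. qcnj \<mu> * V kj * \<mu>)"
  proof
    fix W assume "W \<in> orbit_V V"
    then obtain \<nu> where \<nu>: "qnormsq \<nu> = 1" "W = (\<lambda>kj. qcnj \<nu> * V kj * \<nu>)"
      unfolding orbit_V_def by auto
    have "qcnj (qcnj \<mu> * \<nu>) * (qcnj \<mu> * V kj * \<mu>) * (qcnj \<mu> * \<nu>)
        = qcnj \<nu> * (\<mu> * qcnj \<mu>) * V kj * (\<mu> * qcnj \<mu>) * \<nu>" for kj
      by (simp add: qcnj_mult mult.assoc)
    then have "W = (\<lambda>kj. qcnj (qcnj \<mu> * \<nu>) * (qcnj \<mu> * V kj * \<mu>) * (qcnj \<mu> * \<nu>))"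
      unfolding \<nu> by (simp add: mult_qcnj_unit[OF \<mu>])
    moreover have "qnormsq (qcnj \<mu> * \<nu>) = 1" using \<nu> \<mu> by (simp add: qnormsq_mult)
    ultimately show "W \<in> orbit_V (\<lambda>kj. qcnj \<mu> * V kj * \<mu>)" unfolding orbit_V_def by blast
  qed
qed

text \<open>V omits only entries fixed by semi-normalization and the lower triangle, which is
  recovered by Hermitian symmetry.\<close>

lemma semi_normalized_sandwich_of_V:
  fixes g h :: "nat \<Rightarrow> nat \<Rightarrow> quat"
  assumes sg: "semi_normalized m i g" and sh: "semi_normalized m i h"
    and herm_g: "\<forall>k\<in>{1..m}. \<forall>j\<in>{1..m}. g k j = qcnj (g j k)"
    and herm_h: "\<forall>k\<in>{1..m}. \<forall>j\<in>{1..m}. h k j = qcnj (h j k)"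
    and \<mu>: "qnormsq \<mu> = 1"
    and V: "V_of m i g = (\<lambda>kj. qcnj \<mu> * V_of m i h kj * \<mu>)"
  shows "\<forall>k\<in>{1..m}. \<forall>j\<in>{1..m}. g k j = qcnj \<mu> * h k j * \<mu>"
proof -
  have u: "qcnj \<mu> * \<mu> = 1" using \<mu> by (rule qcnj_mult_unit)
  have upper: "g k j = qcnj \<mu> * h k j * \<mu>" if "k \<in> {1..m}" "j \<in> {1..m}" "k < j" for k j
  proof (cases "k = 1 \<and> j \<le> i")
    case True
    then have "g k j = 1" "h k j = 1" using sg sh that unfolding semi_normalized_def by auto
    then show ?thesis using u by simp
  next
    case False
    then have "V_of m i g (k, j) = g k j" "V_of m i h (k, j) = h k j"
      using that by (auto simp: V_of_def)
    then show ?thesis using fun_cong[OF V, of "(k, j)"] by simp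
  qed
  have diag: "g k k = qcnj \<mu> * h k k * \<mu>" if "k \<in> {1..m}" for k
  proof (cases "k \<le> i")
    case True
    then have "g k k = 0" "h k k = 0" using sg sh that unfolding semi_normalized_def by auto
    then show ?thesis by simp
  next
    case False
    then have "g k k = -1" "h k k = -1" using sg sh that unfolding semi_normalized_def by auto
    then show ?thesis using u by simp
  qed
  show ?thesis
  proof (intro ballI)
    fix k j assume k: "k \<in> {1..m}" and j: "j \<in> {1..m}"
    consider "k < j" | "k = j" | "j < k" by linarith
    then show "g k j = qcnj \<mu> * h k j * \<mu>"
    proof cases
      case 3
      have "g k j = qcnj (qcnj \<mu> * h j k * \<mu>)" using herm_g[rule_format, OF k j] upper[OF j k 3] by simp
      also have "\<dots> = qcnj \<mu> * h k j * \<mu>"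
        using herm_h[rule_format, OF k j] by (simp add: qcnj_mult mult.assoc)
      finally show ?thesis .
    qed (use upper diag k j in auto)
  qed
qed

lemma qline_self: "z \<in> qline z"
  unfolding qline_def rsmult_def by (rule CollectI, rule exI[of _ 1]) simp

lemma qline_eq_qline:
  assumes "P \<in> qline z"
  shows "qline P = qline z"
proof -
  obtain c where c: "c \<noteq> 0" "P = rsmult z c" using assms unfolding qline_def by auto
  show ?thesis
  proof
    show "qline P \<subseteq> qline z"
    proof
      fix u assume "u \<in> qline P"
      then obtain e where e: "e \<noteq> 0" "u = rsmult P e" unfolding qline_def by auto
      have "u = rsmult z (c * e)" using c e by (simp add: rsmult_def mult.assoc)
      moreover have "c * e \<noteq> 0" using c e by simp
      ultimately show "u \<in> qline z" unfolding qline_def by blast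
    qed
    show "qline z \<subseteq> qline P"
    proof
      fix u assume "u \<in> qline z"
      then obtain e where e: "e \<noteq> 0" "u = rsmult z e" unfolding qline_def by auto
      have "c * (inverse c * e) = e" using c by (simp flip: mult.assoc)
      then have "u = rsmult P (inverse c * e)"
        using c e by (simp add: rsmult_def mult.assoc)
      moreover have "inverse c * e \<noteq> 0" using c e by simp
      ultimately show "u \<in> qline P" unfolding qline_def by blast
    qed
  qed
qed

lemma act_qline: "act n A (qline z) = qline (mat_app n A z)"
  unfolding act_def qline_def by (auto simp: mat_app_rsmult[symmetric])

lemma lift_spans:
  assumes "config n m i p" "is_lift m p P" "k \<in> {1..m}"
  shows "P k \<in> qvecs n" "p k = qline (P k)"
proof -
  have "p k \<in> hyp_boundary n \<or> p k \<in> hyp_space n"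
    using assms(1,3) unfolding config_def by (cases "k \<le> i") auto
  then obtain z where z: "z \<in> qvecs n" "p k = qline z"
    unfolding hyp_boundary_def hyp_space_def by auto
  have "P k \<in> p k" using assms(2,3) unfolding is_lift_def by blast
  then obtain c where "P k = rsmult z c" using z unfolding qline_def by blast
  then show "P k \<in> qvecs n" using z rsmult_qvecs by simp
  show "p k = qline (P k)" using \<open>P k \<in> p k\<close> z qline_eq_qline by simp
qed

lemma hform_prepend_combination_eq:
  fixes a b :: "nat \<Rightarrow> nat \<Rightarrow> quat" and c :: quat
  assumes G: "\<forall>j\<in>{1..m}. \<forall>k\<in>{1..m}. hform n (a j) (a k) = hform n (b j) (b k)"
    and m: "2 \<le> m"
  defines "ea \<equiv> (\<lambda>k. if k = 0 then (\<lambda>t. a 1 t - a 2 t * c) else a k)"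
    and "eb \<equiv> (\<lambda>k. if k = 0 then (\<lambda>t. b 1 t - b 2 t * c) else b k)"
  shows "\<forall>j\<le>m. \<forall>k\<le>m. hform n (ea j) (ea k) = hform n (eb j) (eb k)"
proof (intro allI impI)
  fix j k assume j: "j \<le> m" and k: "k \<le> m"
  have G': "hform n (a j') (a k') = hform n (b j') (b k')" if "j' \<in> {1..m}" "k' \<in> {1..m}" for j' k'
    using G that by blast
  have i1: "1 \<in> {1..m}" and i2: "2 \<in> {1..m}" using m by auto
  have ea0: "ea 0 = (\<lambda>t. a 1 t - a 2 t * c)" and eb0: "eb 0 = (\<lambda>t. b 1 t - b 2 t * c)"
    unfolding ea_def eb_def by simp_all
  have eak: "ea t = a t" "eb t = b t" if "t \<noteq> 0" for t
    unfolding ea_def eb_def using that by simp_all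
  show "hform n (ea j) (ea k) = hform n (eb j) (eb k)"
  proof (cases "j = 0"; cases "k = 0")
    assume "j = 0" "k = 0"
    then show ?thesis
      by (simp only: ea0 eb0 hform_diff_left hform_diff_right hform_mult_left hform_mult_right
          G'[OF i1 i1] G'[OF i1 i2] G'[OF i2 i1] G'[OF i2 i2])
  next
    assume "j = 0" "k \<noteq> 0"
    then have kk: "k \<in> {1..m}" using k by auto
    then show ?thesis using \<open>j = 0\<close>
      by (simp only: ea0 eb0 eak[OF \<open>k \<noteq> 0\<close>] hform_diff_left hform_mult_left G'[OF i1 kk] G'[OF i2 kk])
  next
    assume "j \<noteq> 0" "k = 0"
    then have jj: "j \<in> {1..m}" using j by auto
    then show ?thesis using \<open>k = 0\<close>
      by (simp only: ea0 eb0 eak[OF \<open>j \<noteq> 0\<close>] hform_diff_right hform_mult_right G'[OF jj i1] G'[OF jj i2])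
  next
    assume "j \<noteq> 0" "k \<noteq> 0"
    then have "j \<in> {1..m}" "k \<in> {1..m}" using j k by auto
    then show ?thesis using G' by (simp only: eak[OF \<open>j \<noteq> 0\<close>] eak[OF \<open>k \<noteq> 0\<close>])
  qed
qed

text \<open>Prepending the negative vector P_1 - P_2/2 (its norm is -1) makes Witt's theorem
  applicable even when all points lie on the boundary.\<close>

lemma Sp_maps_tuple_with_isotropic_pair:
  fixes P R :: "nat \<Rightarrow> nat \<Rightarrow> quat"
  assumes n: "n \<ge> 1" and m: "2 \<le> m"
    and vecs: "\<forall>k\<in>{1..m}. P k \<in> qvecs n \<and> R k \<in> qvecs n"
    and gram: "\<forall>j\<in>{1..m}. \<forall>k\<in>{1..m}. hform n (P j) (P k) = hform n (R j) (R k)"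
    and P11: "hform n (P 1) (P 1) = 0" and P22: "hform n (P 2) (P 2) = 0"
    and P21: "hform n (P 2) (P 1) = 1"
  shows "\<exists>A\<in>Sp n. \<forall>k\<in>{1..m}. mat_app n A (P k) = R k"
proof -
  define c where "c = qreal (1/2)"
  define x where "x = (\<lambda>k. if k = 0 then (\<lambda>t. P 1 t - P 2 t * c) else P k)"
  define y where "y = (\<lambda>k. if k = 0 then (\<lambda>t. R 1 t - R 2 t * c) else R k)"
  have "\<forall>j\<le>m. \<forall>k\<le>m. hform n (x j) (x k) = hform n (y j) (y k)"
    using hform_prepend_combination_eq[OF gram m, of c] unfolding x_def y_def by blast
  moreover have "\<forall>k\<le>m. x k \<in> qvecs n \<and> y k \<in> qvecs n"
    using vecs m by (auto simp: x_def y_def intro!: qvecs_diff_mult)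
  moreover have "Re1 (hform n (x 0) (x 0)) < 0"
  proof -
    have "hform n (P 1) (P 2) = 1" using P21 qcnj_hform[of n "P 2" "P 1"] by simp
    then have "hform n (x 0) (x 0) = - (c + c)" unfolding x_def using P11 P22 P21
      by (simp add: hform_diff_left hform_diff_right hform_mult_left hform_mult_right c_def)
    then show ?thesis by (simp add: c_def qreal_def)
  qed
  ultimately obtain A where A: "A \<in> Sp n" "\<forall>k\<le>m. mat_app n A (x k) = y k"
    using Sp_maps_tuple_of_equal_gram[OF n] by blast
  have "mat_app n A (P k) = R k" if "k \<in> {1..m}" for k
    using A(2)[rule_format, of k] that by (simp add: x_def y_def)
  with A(1) show ?thesis by blast
qed

lemma act_qline_imp_rescaled:
  assumes "act n A (qline z) = qline w"
  shows "\<exists>l. l \<noteq> 0 \<and> mat_app n A z = rsmult w l"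
proof -
  have "mat_app n A z \<in> qline w" using assms qline_self[of "mat_app n A z"] by (simp add: act_qline)
  then show ?thesis unfolding qline_def by blast
qed

lemma act_qline_of_rescaled:
  assumes "mat_app n A z = rsmult w l" and "l \<noteq> 0"
  shows "act n A (qline z) = qline w"
proof -
  have "mat_app n A z \<in> qline w" using assms unfolding qline_def by blast
  then show ?thesis by (simp add: act_qline qline_eq_qline)
qed

lemma hform_rsmult_gram:
  "k \<in> {1..m} \<Longrightarrow> j \<in> {1..m} \<Longrightarrow>
    hform n (rsmult (Q j) a) (rsmult (Q k) b) = qcnj b * gram n m Q k j * a"
  by (simp add: gram_apply hform_rsmult_left hform_rsmult_right mult.assoc)

lemma congruent_imp_orbit_V_eq:
  assumes i: "3 \<le> i" "i \<le> m"
    and cp: "config n m i p" and cq: "config n m i q"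
    and lp: "is_lift m p P" and lq: "is_lift m q Q"
    and sP: "semi_normalized m i (gram n m P)" and sQ: "semi_normalized m i (gram n m Q)"
    and "congruent_tuples n m p q"
  shows "orbit_V (V_of m i (gram n m P)) = orbit_V (V_of m i (gram n m Q))"
proof -
  obtain A where A: "A \<in> Sp n" "\<forall>k\<in>{1..m}. act n A (p k) = q k"
    using \<open>congruent_tuples n m p q\<close> unfolding congruent_tuples_def by blast
  have "\<forall>k\<in>{1..m}. \<exists>l. mat_app n A (P k) = rsmult (Q k) l"
    using A(2) act_qline_imp_rescaled lift_spans(2)[OF cp lp] lift_spans(2)[OF cq lq] by metis
  then obtain l where l: "\<forall>k\<in>{1..m}. mat_app n A (P k) = rsmult (Q k) (l k)" by meson
  have "\<forall>k\<in>{1..m}. \<forall>j\<in>{1..m}. gram n m P k j = qcnj (l k) * gram n m Q k j * l j"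
  proof (intro ballI)
    fix k j assume k: "k \<in> {1..m}" and j: "j \<in> {1..m}"
    have "gram n m P k j = hform n (mat_app n A (P j)) (mat_app n A (P k))"
      using gram_apply[OF k j] Sp_hform[OF A(1)] lift_spans(1)[OF cp lp] j k by simp
    then show "gram n m P k j = qcnj (l k) * gram n m Q k j * l j"
      using l j k hform_rsmult_gram[OF k j] by simp
  qed
  moreover from this have unit: "qnormsq (l 1) = 1" and const: "\<forall>k\<in>{1..m}. l k = l 1"
    using semi_normalized_rescaling_unit[OF sP sQ i] by blast+
  ultimately have "\<forall>k\<in>{1..m}. \<forall>j\<in>{1..m}. gram n m P k j = qcnj (l 1) * gram n m Q k j * l 1"
    by (metis (no_types, lifting))
  then have "V_of m i (gram n m P) = (\<lambda>kj. qcnj (l 1) * V_of m i (gram n m Q) kj * l 1)"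
    by (rule V_of_sandwich)
  then show ?thesis using orbit_V_sandwich[OF unit] by simp
qed

lemma orbit_V_eq_imp_congruent:
  assumes n: "n \<ge> 1" and i: "3 \<le> i" "i \<le> m"
    and cp: "config n m i p" and cq: "config n m i q"
    and lp: "is_lift m p P" and lq: "is_lift m q Q"
    and sP: "semi_normalized m i (gram n m P)" and sQ: "semi_normalized m i (gram n m Q)"
    and orb: "orbit_V (V_of m i (gram n m P)) = orbit_V (V_of m i (gram n m Q))"
  shows "congruent_tuples n m p q"
proof -
  obtain \<mu> where \<mu>: "qnormsq \<mu> = 1"
    and V: "V_of m i (gram n m P) = (\<lambda>kj. qcnj \<mu> * V_of m i (gram n m Q) kj * \<mu>)"
  proof -
    have "V_of m i (gram n m P) \<in> orbit_V (V_of m i (gram n m Q))"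
      using V_in_orbit_V[of "V_of m i (gram n m P)"] orb by simp
    then show thesis using that unfolding orbit_V_def by blast
  qed
  have rel: "\<forall>k\<in>{1..m}. \<forall>j\<in>{1..m}. gram n m P k j = qcnj \<mu> * gram n m Q k j * \<mu>"
    using semi_normalized_sandwich_of_V[OF sP sQ gram_hermitian gram_hermitian \<mu> V] .
  define R where "R k = rsmult (Q k) \<mu>" for k
  have gram_eq: "\<forall>j\<in>{1..m}. \<forall>k\<in>{1..m}. hform n (P j) (P k) = hform n (R j) (R k)"
    using rel gram_apply hform_rsmult_gram unfolding R_def by metis
  have vecs: "\<forall>k\<in>{1..m}. P k \<in> qvecs n \<and> R k \<in> qvecs n"
    using lift_spans(1)[OF cp lp] lift_spans(1)[OF cq lq] by (simp add: R_def rsmult_qvecs)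
  have m: "2 \<le> m" and one: "1 \<in> {1..m}" and two: "2 \<in> {1..m}" using i by auto
  have "gram n m P 1 1 = 0" "gram n m P 2 2 = 0" "gram n m P 1 2 = 1"
    using sP i unfolding semi_normalized_def by auto
  then have "hform n (P 1) (P 1) = 0" "hform n (P 2) (P 2) = 0" "hform n (P 2) (P 1) = 1"
    using gram_apply[OF one one] gram_apply[OF two two] gram_apply[OF one two] by simp_all
  then obtain A where A: "A \<in> Sp n" "\<forall>k\<in>{1..m}. mat_app n A (P k) = R k"
    using Sp_maps_tuple_with_isotropic_pair[OF n m vecs gram_eq] by blast
  have "\<mu> \<noteq> 0" using \<mu> by auto
  then have "\<forall>k\<in>{1..m}. act n A (p k) = q k"
    using A(2) act_qline_of_rescaled lift_spans(2)[OF cp lp] lift_spans(2)[OF cq lq]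
    unfolding R_def by metis
  with A(1) show ?thesis unfolding congruent_tuples_def by blast
qed

theorem lemma8p8:
  fixes n m i :: nat
    and p q :: "nat \<Rightarrow> (nat \<Rightarrow> quat) set"
    and P Q :: "nat \<Rightarrow> (nat \<Rightarrow> quat)"
  assumes "n \<ge> 1" and "m \<ge> 4" and "3 \<le> i" and "i \<le> m"
    and "config n m i p" and "config n m i q"
    and "is_lift m p P" and "is_lift m q Q"
    and "semi_normalized m i (gram n m P)"
    and "semi_normalized m i (gram n m Q)"
  shows "congruent_tuples n m p q \<longleftrightarrow>
         orbit_V (V_of m i (gram n m P)) = orbit_V (V_of m i (gram n m Q))"
  using congruent_imp_orbit_V_eq[OF assms(3-10)] orbit_V_eq_imp_congruent[OF assms(1,3-10)]
  by blast

end
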